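(* Let $\alpha\in\mathbb{N}$. For every $r^{(0)}(n),r^{(1)}(n),r^{(2)}(n)\in\mathbb{C}[n]$ there exists $\bar B\in\mathfrak{D}$ such that for all $n\in\mathbb{N}_0$ $$r^{(0)}(n)\int_{-1}^{n}\big[r^{(1)}(s)L^\alpha_s(x)+r^{(2)}(s)L^\alpha_{s-1}(x)\big]\,d\mu_{\mathrm{d}}(s)=\bar B\,L^\alpha_n(x).$$
   Context: Laguerre polynomials: $L^\alpha_n(x)=\frac{\Gamma(\alpha+n+1)}{\Gamma(\alpha+1)\Gamma(n+1)}\,{}_1F_1(-n;\alpha+1;x)$ for $n\in\mathbb{N}_0$, with ${}_1F_1(a;c;x)=\sum_{j\ge0}\frac{(a)_jx^j}{(c)_jj!}$, and $L^\alpha_{-j}(x)=0$ for $j\in\mathbb{N}$. Discrete integral: $\int_m^n f(s)\,d\mu_{\mathrm{d}}(s)=\sum_{s=m+1}^n f(s)$ if $n>m$ (and $0$ if $n=m$). $\mathfrak{D}$ is the associative algebra of differential operators generated by $\frac{d}{dx}$ and $x\frac{d^2}{dx^2}-x\frac{d}{dx}$. *)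

theory Defs
  imports "HOL-Analysis.Analysis" "HOL-Computational_Algebra.Polynomial"
begin

text \<open>Confluent hypergeometric 1F1(a;c;x) as a polynomial, truncated at degree N
  (for a = -n with N = n the series terminates, since the Pochhammer symbol (-n)_j vanishes for j > n).\<close>
definition hyp1F1_trunc :: "complex \<Rightarrow> complex \<Rightarrow> nat \<Rightarrow> complex poly" where
  "hyp1F1_trunc a c N =
     (\<Sum>j\<le>N. monom (pochhammer a j / (pochhammer c j * fact j)) j)"

definition laguerre :: "nat \<Rightarrow> int \<Rightarrow> complex poly" where
  "laguerre \<alpha> s =
     (if s < 0 then 0
      else smult (Gamma (of_nat \<alpha> + of_int s + 1) /
                    (Gamma (of_nat \<alpha> + 1) * Gamma (of_int s + 1)))
                 (hyp1F1_trunc (- of_int s) (of_nat \<alpha> + 1) (nat s)))"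

definition opD :: "complex poly \<Rightarrow> complex poly" where
  "opD p = pderiv p"

definition opE :: "complex poly \<Rightarrow> complex poly" where
  "opE p = [:0, 1:] * pderiv (pderiv p) - [:0, 1:] * pderiv p"

inductive_set frakD :: "(complex poly \<Rightarrow> complex poly) set" where
  frakD_id: "id \<in> frakD"
| frakD_D: "opD \<in> frakD"
| frakD_E: "opE \<in> frakD"
| frakD_smult: "f \<in> frakD \<Longrightarrow> (\<lambda>p. smult c (f p)) \<in> frakD"
| frakD_add: "f \<in> frakD \<Longrightarrow> g \<in> frakD \<Longrightarrow> (\<lambda>p. f p + g p) \<in> frakD"
| frakD_comp: "f \<in> frakD \<Longrightarrow> g \<in> frakD \<Longrightarrow> f \<circ> g \<in> frakD"

end

theory Submission
  imports Defs
begin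

text \<open>The operator N = -opE - (\<alpha>+1) d/dx of Laguerre's differential equation
  x y'' + (\<alpha>+1-x) y' + n y = 0 lies in frakD and has L_s as eigenvector with eigenvalue s,
  so r(N) L_s = r(s) L_s for every polynomial r. The recurrence L_(n+1)' = L_n' - L_n
  telescopes the discrete integrals of L_s and of L_(s-1) to L_n - L_n' and -L_n'.
  Hence the left-hand side equals B L_n with B = (r1(N) (1 - d/dx) - r2(N + 1) d/dx) r0(N).\<close>

lemma frakD_linear:
  assumes "f \<in> frakD"
  shows "f (smult c p) = smult c (f p) \<and> f (p + q) = f p + f q"
  using assms
proof (induction arbitrary: c p q)
  case (frakD_smult f d)
  then show ?case by (simp add: smult_add_right mult.commute)
qed (simp_all add: opD_def opE_def pderiv_add pderiv_smult algebra_simps smult_diff_right smult_add_right)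

lemma frakD_map_smult: "f \<in> frakD \<Longrightarrow> f (smult c p) = smult c (f p)"
  using frakD_linear by blast

lemma frakD_map_add: "f \<in> frakD \<Longrightarrow> f (p + q) = f p + f q"
  using frakD_linear by blast

lemma frakD_map_diff: "f \<in> frakD \<Longrightarrow> f (p - q) = f p - f q"
  using frakD_map_add[of f p "smult (-1) q"] frakD_map_smult[of f "-1" q] by simp

lemma frakD_map_sum: "f \<in> frakD \<Longrightarrow> f (\<Sum>x\<in>A. g x) = (\<Sum>x\<in>A. f (g x))"
  by (induction A rule: infinite_finite_induct)
    (simp_all add: frakD_map_add frakD_map_smult[of f 0 0, simplified])

lemma frakD_diff: "f \<in> frakD \<Longrightarrow> g \<in> frakD \<Longrightarrow> (\<lambda>p. f p - g p) \<in> frakD"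
  using frakD_add[of f "\<lambda>p. smult (-1) (g p)"] frakD_smult[of g "-1"] by simp

lemma frakD_sum:
  "finite A \<Longrightarrow> (\<And>i. i \<in> A \<Longrightarrow> f i \<in> frakD) \<Longrightarrow> (\<lambda>p. \<Sum>i\<in>A. f i p) \<in> frakD"
proof (induction A rule: finite_induct)
  case empty
  show ?case using frakD_smult[OF frakD_id, of 0] by simp
next
  case (insert x A)
  then show ?case using frakD_add[of "f x" "\<lambda>p. \<Sum>i\<in>A. f i p"] by simp
qed

lemma frakD_funpow: "T \<in> frakD \<Longrightarrow> T ^^ k \<in> frakD"
  by (induction k) (simp_all add: frakD_id frakD_comp)

definition poly_op :: "complex poly \<Rightarrow> (complex poly \<Rightarrow> complex poly) \<Rightarrow> complex poly \<Rightarrow> complex poly" where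
  "poly_op r T p = (\<Sum>k\<le>degree r. smult (coeff r k) ((T ^^ k) p))"

lemma poly_op_in_frakD: "T \<in> frakD \<Longrightarrow> poly_op r T \<in> frakD"
  unfolding poly_op_def[abs_def] by (intro frakD_sum frakD_smult frakD_funpow) auto

lemma funpow_eigenvector:
  assumes "T \<in> frakD" "T p = smult \<mu> p"
  shows "(T ^^ k) p = smult (\<mu> ^ k) p"
  by (induction k) (simp_all add: assms frakD_map_smult mult.commute)

lemma poly_op_eigenvector:
  assumes "T \<in> frakD" "T p = smult \<mu> p"
  shows "poly_op r T p = smult (poly r \<mu>) p"
  by (simp add: poly_op_def funpow_eigenvector[OF assms] poly_altdef smult_sum [symmetric] mult.commute)

lemma coeff_hyp1F1_trunc:
  "coeff (hyp1F1_trunc a c N) j = (if j \<le> N then pochhammer a j / (pochhammer c j * fact j) else 0)"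
  unfolding hyp1F1_trunc_def by (simp add: coeff_sum)

lemma pochhammer_minus_of_nat:
  assumes "j \<le> n"
  shows "pochhammer (- of_nat n :: 'a::field_char_0) j = (-1) ^ j * fact n / fact (n - j)"
proof -
  have "(of_nat n gchoose j :: 'a) = (-1) ^ j * pochhammer (- of_nat n) j / fact j"
    by (rule gbinomial_pochhammer)
  then have "pochhammer (- of_nat n :: 'a) j = (-1) ^ j * (fact j * of_nat (n choose j))"
    by (simp add: binomial_gbinomial field_simps)
  then show ?thesis
    by (simp add: fact_binomial[OF assms])
qed

lemma pochhammer_of_nat_plus_1:
  "pochhammer (of_nat m + 1 :: 'a::field_char_0) j = fact (m + j) / fact m"
proof -
  have "fact (m + j) = (fact m * pochhammer (of_nat m + 1) j :: 'a)"
    using pochhammer_product'[of "1::'a" m j] by (simp add: pochhammer_fact add.commute)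
  then show ?thesis by simp
qed

text \<open>The classical form L_n(x) = \<Sum>j. (-1)^j C(n+\<alpha>, n-j) x^j / j!, with C(n+\<alpha>, \<alpha>+j)
  in place of C(n+\<alpha>, n-j) so that the terms j > n vanish without a case split.\<close>

lemma coeff_laguerre:
  "coeff (laguerre \<alpha> (int n)) j = (-1) ^ j * of_nat ((n + \<alpha>) choose (\<alpha> + j)) / fact j"
proof (cases "j \<le> n")
  case True
  have Gamma: "Gamma (of_nat m + 1 :: complex) = fact m" for m
    using Gamma_fact[of m, where 'a=complex] by (simp add: add.commute)
  have "coeff (laguerre \<alpha> (int n)) j =
      Gamma (of_nat (\<alpha> + n) + 1) / (Gamma (of_nat \<alpha> + 1) * Gamma (of_nat n + 1))
      * (pochhammer (- of_nat n) j / (pochhammer (of_nat \<alpha> + 1) j * fact j))"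
    using True by (simp add: laguerre_def coeff_hyp1F1_trunc add_ac)
  also have "\<dots> = (-1) ^ j * (fact (n + \<alpha>) / (fact (\<alpha> + j) * fact (n - j))) / fact j"
    unfolding Gamma pochhammer_minus_of_nat[OF True] pochhammer_of_nat_plus_1
    by (simp add: field_simps)
  also have "\<dots> = (-1) ^ j * of_nat ((n + \<alpha>) choose (\<alpha> + j)) / fact j"
    using True by (subst binomial_fact) auto
  finally show ?thesis .
next
  case False
  then show ?thesis
    by (simp add: laguerre_def coeff_hyp1F1_trunc)
qed

lemma coeff_pderiv_laguerre:
  "coeff (pderiv (laguerre \<alpha> (int n))) j = - ((-1) ^ j * of_nat ((n + \<alpha>) choose Suc (\<alpha> + j)) / fact j)"
  unfolding coeff_pderiv coeff_laguerre by (simp del: of_nat_Suc)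

lemma pderiv_laguerre_0: "pderiv (laguerre \<alpha> 0) = 0"
  using coeff_pderiv_laguerre[of \<alpha> 0] by (intro poly_eqI) simp

lemma pderiv_laguerre_Suc:
  "pderiv (laguerre \<alpha> (int (Suc n))) = pderiv (laguerre \<alpha> (int n)) - laguerre \<alpha> (int n)"
  by (rule poly_eqI)
    (simp only: coeff_diff coeff_pderiv_laguerre coeff_laguerre, simp add: add_divide_distrib algebra_simps)

lemma sum_laguerre:
  "(\<Sum>s\<in>{0..int n}. laguerre \<alpha> s) = laguerre \<alpha> (int n) - pderiv (laguerre \<alpha> (int n))"
proof (induction n)
  case 0
  then show ?case by (simp add: pderiv_laguerre_0)
next
  case (Suc n)
  have "{0..int (Suc n)} = insert (int (Suc n)) {0..int n}" by auto
  then show ?case using Suc pderiv_laguerre_Suc[of \<alpha> n] by simp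
qed

lemma sum_laguerre_shifted:
  "(\<Sum>s\<in>{0..int n}. laguerre \<alpha> (s - 1)) = - pderiv (laguerre \<alpha> (int n))"
proof (induction n)
  case 0
  have "laguerre \<alpha> (-1) = 0" by (simp add: laguerre_def)
  then show ?case by (simp add: pderiv_laguerre_0)
next
  case (Suc n)
  have "{0..int (Suc n)} = insert (int (Suc n)) {0..int n}" by auto
  then show ?case using Suc pderiv_laguerre_Suc[of \<alpha> n] by simp
qed

lemma of_nat_Suc_times_binomial_Suc:
  "(of_nat (Suc k) * of_nat (m choose Suc k) :: 'a::field_char_0) = (of_nat m - of_nat k) * of_nat (m choose k)"
  using gbinomial_mult_1[of "of_nat m :: 'a" k] by (simp add: binomial_gbinomial algebra_simps)

lemma coeff_opE: "coeff (opE p) j = of_nat j * (coeff (pderiv p) j - coeff p j)"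
  by (cases j) (simp_all add: opE_def coeff_pderiv algebra_simps)

definition laguerre_op :: "nat \<Rightarrow> complex poly \<Rightarrow> complex poly" where
  "laguerre_op \<alpha> p = - opE p - smult (of_nat \<alpha> + 1) (opD p)"

lemma laguerre_op_in_frakD: "laguerre_op \<alpha> \<in> frakD"
proof -
  have "(\<lambda>p. smult (-1) (opE p) - smult (of_nat \<alpha> + 1) (opD p)) \<in> frakD"
    by (intro frakD_diff frakD_E frakD_smult frakD_D)
  then show ?thesis by (simp add: laguerre_op_def[abs_def])
qed

lemma laguerre_op_laguerre_nat:
  "laguerre_op \<alpha> (laguerre \<alpha> (int n)) = smult (of_nat n) (laguerre \<alpha> (int n))"
proof (rule poly_eqI)
  fix j
  let ?c = "coeff (laguerre \<alpha> (int n)) j" and ?d = "coeff (pderiv (laguerre \<alpha> (int n))) j"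
  let ?C = "\<lambda>k. of_nat ((n + \<alpha>) choose k) :: complex"
  have "(of_nat \<alpha> + of_nat j + 1) * ?d = - ((-1) ^ j / fact j) * (of_nat (Suc (\<alpha> + j)) * ?C (Suc (\<alpha> + j)))"
    by (simp add: coeff_pderiv_laguerre field_simps)
  also have "\<dots> = - ((-1) ^ j / fact j) * ((of_nat n - of_nat j) * ?C (\<alpha> + j))"
    using of_nat_Suc_times_binomial_Suc[of "\<alpha> + j" "n + \<alpha>", where 'a=complex] by simp
  also have "\<dots> = (of_nat j - of_nat n) * ?c"
    by (simp add: coeff_laguerre field_simps)
  finally have "(of_nat \<alpha> + of_nat j + 1) * ?d = (of_nat j - of_nat n) * ?c" .
  then show "coeff (laguerre_op \<alpha> (laguerre \<alpha> (int n))) j = coeff (smult (of_nat n) (laguerre \<alpha> (int n))) j"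
    unfolding laguerre_op_def opD_def by (simp add: coeff_opE algebra_simps)
qed

lemma laguerre_op_laguerre: "laguerre_op \<alpha> (laguerre \<alpha> s) = smult (of_int s) (laguerre \<alpha> s)"
proof (cases "s < 0")
  case True
  then show ?thesis by (simp add: laguerre_def laguerre_op_def opE_def opD_def)
next
  case False
  then obtain n where "s = int n" by (metis nonneg_eq_int not_less)
  then show ?thesis using laguerre_op_laguerre_nat[of \<alpha> n] by simp
qed

theorem lemma4p4:
  fixes \<alpha> :: nat and r0 r1 r2 :: "complex poly"
  assumes "\<alpha> \<ge> 1"
  shows "\<exists>B\<in>frakD. \<forall>n::nat.
           smult (poly r0 (of_nat n))
             (\<Sum>s\<in>{0..int n}. smult (poly r1 (of_int s)) (laguerre \<alpha> s)
                               + smult (poly r2 (of_int s)) (laguerre \<alpha> (s - 1)))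
           = B (laguerre \<alpha> (int n))"
proof -
  let ?L = "laguerre \<alpha>"
  define P where "P r = poly_op r (laguerre_op \<alpha>)" for r
  define q where "q = pcompose r2 [:1, 1:]"
  define B where "B = (\<lambda>p. P r1 (p - opD p) - P q (opD p)) \<circ> P r0"
  have P_frakD: "P r \<in> frakD" for r
    unfolding P_def by (rule poly_op_in_frakD[OF laguerre_op_in_frakD])
  have P_laguerre: "P r (?L s) = smult (poly r (of_int s)) (?L s)" for r s
    unfolding P_def by (intro poly_op_eigenvector laguerre_op_in_frakD laguerre_op_laguerre)
  have "(\<lambda>p. P r1 (p - opD p) - P q (opD p)) \<in> frakD"
    using frakD_diff[OF frakD_comp[OF P_frakD frakD_diff[OF frakD_id frakD_D]] frakD_comp[OF P_frakD frakD_D]]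
    by (simp add: comp_def)
  then have "B \<in> frakD"
    unfolding B_def by (intro frakD_comp P_frakD)
  moreover have "smult (poly r0 (of_nat n))
      (\<Sum>s\<in>{0..int n}. smult (poly r1 (of_int s)) (?L s) + smult (poly r2 (of_int s)) (?L (s - 1)))
      = B (?L (int n))" for n
  proof -
    have "(\<Sum>s\<in>{0..int n}. smult (poly r1 (of_int s)) (?L s) + smult (poly r2 (of_int s)) (?L (s - 1)))
        = (\<Sum>s\<in>{0..int n}. P r1 (?L s) + P q (?L (s - 1)))"
      by (simp add: P_laguerre q_def poly_pcompose)
    also have "\<dots> = P r1 (?L (int n) - pderiv (?L (int n))) - P q (pderiv (?L (int n)))"
      by (simp add: sum.distrib frakD_map_sum[OF P_frakD, symmetric] sum_laguerre sum_laguerre_shifted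
          frakD_map_smult[OF P_frakD, of _ "-1", simplified])
    finally show ?thesis
      by (simp add: B_def opD_def P_laguerre pderiv_smult smult_diff_right
          frakD_map_smult[OF P_frakD] frakD_map_diff[OF P_frakD])
  qed
  ultimately show ?thesis by blast
qed

end
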